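(* Let $n\geq 3$, $0\leq k\leq n$, $0<\delta<\frac13$, $r>0$. Let $\mathbf{X}_k$ be a metric space, $\hat q\in\mathbf X_k$, $(M^n,g)$ a Riemannian manifold, $q\in M^n$, and suppose $\Phi:B_{10r}(0,\hat q)\to B_{10r}(q)$ is a pointed $(\delta r)$-Gromov-Hausdorff approximation, where $B_{10r}(0,\hat q)\subset\mathbb{R}^k\times\mathbf{X}_k$. Then for any $\hat q_1^+,\hat q_1^-\in B_r(\hat q)\subset\mathbf{X}_k$ there exists $\hat q_0\in B_{3r}(\hat q)$ such that $$\Big|d(\hat q_0,\hat q_1^+)-\tfrac12 d(\hat q_1^+,\hat q_1^-)\Big|\leq 8\sqrt\delta\, r\quad\text{and}\quad\Big|d(\hat q_0,\hat q_1^-)-\tfrac12 d(\hat q_1^+,\hat q_1^-)\Big|\leq 8\sqrt\delta\, r,$$ and moreover, if $\sqrt\delta\, r\leq\frac{d(\hat q_1^+,\hat q_1^-)}{100}$, then, with $q_1=\Phi(0,\hat q_0)$, $p_{k+1}^+=\Phi(0,\hat q_1^+)$, $p_{k+1}^-=\Phi(0,\hat q_1^-)$, one has $$d(q_1,p_{k+1}^+)+d(q_1,p_{k+1}^-)-d(p_{k+1}^+,p_{k+1}^-)\leq 16\sqrt\delta\, r\quad\text{and}\quad\min\{d(q_1,p_{k+1}^+),d(q_1,p_{k+1}^-)\}\geq\tfrac14 d(\hat q_1^+,\hat q_1^-).$$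
   Context: $B_\rho(x)$ is the open ball. $\mathbb{R}^k\times\mathbf{X}_k$ has the product metric $\sqrt{|a-b|^2+d_{\mathbf X_k}(x,y)^2}$. A pointed $\eta$-Gromov-Hausdorff approximation $f:(\mathbf{X},x_0)\to(\mathbf{Y},y_0)$ satisfies $f(x_0)=y_0$, every point of $\mathbf Y$ lies within $\eta$ of $f(\mathbf X)$, and $|d(f(x_1),f(x_2))-d(x_1,x_2)|<\eta$ for all $x_1,x_2$; base points here are $(0,\hat q)$ and $q$. *)

theory Defs
  imports "HOL-Analysis.Analysis"
begin

text \<open>Euclidean space R^k, realised as functions nat => real vanishing from index k on,
  with the Euclidean distance.\<close>
definition Rk :: "nat \<Rightarrow> (nat \<Rightarrow> real) set" where
  "Rk k = {v. \<forall>i\<ge>k. v i = 0}"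

definition dist_Rk :: "nat \<Rightarrow> (nat \<Rightarrow> real) \<Rightarrow> (nat \<Rightarrow> real) \<Rightarrow> real" where
  "dist_Rk k v w = sqrt (\<Sum>i<k. (v i - w i)\<^sup>2)"

definition dist_prod :: "nat \<Rightarrow> (nat \<Rightarrow> real) \<times> 'x::metric_space \<Rightarrow> (nat \<Rightarrow> real) \<times> 'x \<Rightarrow> real" where
  "dist_prod k p p' = sqrt ((dist_Rk k (fst p) (fst p'))\<^sup>2 + (dist (snd p) (snd p'))\<^sup>2)"

definition prod_ball :: "nat \<Rightarrow> 'x::metric_space \<Rightarrow> real \<Rightarrow> ((nat \<Rightarrow> real) \<times> 'x) set" where
  "prod_ball k x0 \<rho> = {p. fst p \<in> Rk k \<and> dist_prod k p (\<lambda>_. 0, x0) < \<rho>}"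

definition pointed_GH_approx ::
  "'a set \<Rightarrow> ('a \<Rightarrow> 'a \<Rightarrow> real) \<Rightarrow> 'a \<Rightarrow> 'b::metric_space set \<Rightarrow> 'b \<Rightarrow> real \<Rightarrow> ('a \<Rightarrow> 'b) \<Rightarrow> bool" where
  "pointed_GH_approx A dA a0 B b0 \<eta> f \<longleftrightarrow>
     f a0 = b0 \<and> f ` A \<subseteq> B \<and>
     (\<forall>y\<in>B. \<exists>x\<in>A. dist (f x) y < \<eta>) \<and>
     (\<forall>x1\<in>A. \<forall>x2\<in>A. \<bar>dist (f x1) (f x2) - dA x1 x2\<bar> < \<eta>)"

text \<open>Length of a curve gamma : [0,1] -> M, via partition sums; the curve has length
  at most L iff every partition sum is at most L.\<close>
definition partition_sums :: "(real \<Rightarrow> 'm::metric_space) \<Rightarrow> real set" where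
  "partition_sums \<gamma> = {(\<Sum>i<N. dist (\<gamma> (t i)) (\<gamma> (t (Suc i)))) | t N.
      t 0 = 0 \<and> t N = 1 \<and> (\<forall>i<N. t i \<le> t (Suc i))}"

text \<open>Length (intrinsic) metric space: the distance is the infimum of lengths of continuous
  curves joining the points.  (Every curve has length \<ge> distance, so this says that for
  every eps > 0 there is a curve of length \<le> d(x,y) + eps.)\<close>
definition length_space :: "'m::metric_space itself \<Rightarrow> bool" where
  "length_space _ \<longleftrightarrow> (\<forall>x y::'m. \<forall>\<epsilon>>0. \<exists>\<gamma>. continuous_on {0..1} \<gamma> \<and> \<gamma> 0 = x \<and> \<gamma> 1 = y \<and>
       (\<forall>s\<in>partition_sums \<gamma>. s \<le> dist x y + \<epsilon>))"

end

theory Submission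
  imports Defs
begin

text \<open>A length space has approximate midpoints, so a \<open>\<delta> r\<close>-midpoint of the images
  \<open>\<Phi>(0, q\<^sub>1\<^sup>+)\<close>, \<open>\<Phi>(0, q\<^sub>1\<^sup>-)\<close> exists in \<open>M\<close>.  Lifting it through the
  approximation gives a point \<open>(a, y)\<close> of \<open>\<real>\<^sup>k \<times> X\<close>, and since the product distance dominates the
  distance of the \<open>X\<close>-components, \<open>y\<close> is a \<open>3 \<delta> r\<close>-midpoint of \<open>q\<^sub>1\<^sup>+\<close>, \<open>q\<^sub>1\<^sup>-\<close> in \<open>X\<close>.  On the
  slice \<open>{0} \<times> X\<close> the approximation distorts distances by less than \<open>\<delta> r\<close>, and \<open>\<delta> \<le> \<surd>\<delta>\<close>
  turns all these errors into the stated bounds.\<close>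

lemma dist_prod_zero_slice: "dist_prod k (\<lambda>_. 0, a) (\<lambda>_. 0, b) = dist a b"
  by (simp add: dist_prod_def dist_Rk_def)

lemma dist_snd_le_dist_prod: "dist (snd p) (snd p') \<le> dist_prod k p p'"
  unfolding dist_prod_def by (rule real_sqrt_sum_squares_ge2)

lemma zero_slice_in_prod_ball_iff: "(\<lambda>_. 0, a) \<in> prod_ball k x0 \<rho> \<longleftrightarrow> dist a x0 < \<rho>"
  by (simp add: prod_ball_def Rk_def dist_prod_zero_slice)

lemma length_space_approx_midpoint:
  fixes x y :: "'m::metric_space"
  assumes "length_space TYPE('m)" and "\<epsilon> > 0"
  obtains m where "dist x m \<le> (dist x y + \<epsilon>) / 2" and "dist m y \<le> (dist x y + \<epsilon>) / 2"
proof -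
  obtain \<gamma> where \<gamma>: "continuous_on {0..1} \<gamma>" "\<gamma> 0 = x" "\<gamma> 1 = y"
    and short: "\<forall>s\<in>partition_sums \<gamma>. s \<le> dist x y + \<epsilon>"
    using assms unfolding length_space_def by blast
  let ?f = "\<lambda>t. dist x (\<gamma> t) - dist (\<gamma> t) y"
  have "continuous_on {0..1} ?f"
    by (intro continuous_intros \<gamma>(1))
  moreover have "?f 0 \<le> 0" "0 \<le> ?f 1"
    using \<gamma> by auto
  ultimately obtain t where t: "0 \<le> t" "t \<le> 1" "?f t = 0"
    using IVT'[of ?f 0 0 1] by auto
  define ts where "ts = (\<lambda>i::nat. if i = 0 then 0 else if i = 1 then t else (1::real))"
  have "(\<Sum>i<2. dist (\<gamma> (ts i)) (\<gamma> (ts (Suc i)))) \<in> partition_sums \<gamma>"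
    unfolding partition_sums_def using t by (auto simp: ts_def less_2_cases_iff intro!: exI[of _ ts])
  with short have "dist x (\<gamma> t) + dist (\<gamma> t) y \<le> dist x y + \<epsilon>"
    by (auto simp: ts_def numeral_2_eq_2 \<gamma>(2,3))
  with t(3) show thesis
    by (intro that[of "\<gamma> t"]) auto
qed

context
  fixes k :: nat and qh :: "'x::metric_space" and q :: "'m::metric_space"
    and r \<eta> :: real and \<Phi> :: "(nat \<Rightarrow> real) \<times> 'x \<Rightarrow> 'm"
  assumes GH: "pointed_GH_approx (prod_ball k qh (10*r)) (dist_prod k) (\<lambda>_. 0, qh) (ball q (10*r)) q \<eta> \<Phi>"
begin

lemma GH_approx_distortion:
  "x1 \<in> prod_ball k qh (10*r) \<Longrightarrow> x2 \<in> prod_ball k qh (10*r) \<Longrightarrow>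
     \<bar>dist (\<Phi> x1) (\<Phi> x2) - dist_prod k x1 x2\<bar> < \<eta>"
  using GH unfolding pointed_GH_approx_def by blast

lemma GH_approx_distortion_zero_slice:
  "dist a qh < 10*r \<Longrightarrow> dist b qh < 10*r \<Longrightarrow>
     \<bar>dist (\<Phi> (\<lambda>_. 0, a)) (\<Phi> (\<lambda>_. 0, b)) - dist a b\<bar> < \<eta>"
  using GH_approx_distortion by (metis zero_slice_in_prod_ball_iff dist_prod_zero_slice)

lemma GH_approx_lift_approx_midpoint:
  assumes "length_space TYPE('m)" and "0 < \<eta>" and "\<eta> < r/3"
    and qp: "dist qp qh < r" and qm: "dist qm qh < r"
  obtains y where "dist y qh < 3*r"
    and "dist y qp < dist qp qm / 2 + 3*\<eta>" and "dist y qm < dist qp qm / 2 + 3*\<eta>"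
proof -
  define pp where "pp = \<Phi> (\<lambda>_. 0, qp)"
  define pm where "pm = \<Phi> (\<lambda>_. 0, qm)"
  have "r > 0" using assms by linarith
  have "dist qp qm < 2*r"
    using dist_triangle3[of qp qm qh] qp qm by (simp add: dist_commute)
  have pp_pm: "dist pp pm < dist qp qm + \<eta>"
    unfolding pp_def pm_def using GH_approx_distortion_zero_slice[of qp qm] qp qm \<open>r > 0\<close>
    by (simp add: abs_less_iff)
  have "\<Phi> (\<lambda>_. 0, qh) = q"
    using GH unfolding pointed_GH_approx_def by blast
  hence q_pp: "dist q pp < dist qh qp + \<eta>"
    using GH_approx_distortion_zero_slice[of qh qp] qp \<open>r > 0\<close> unfolding pp_def
    by (simp add: abs_less_iff)
  obtain m where pp_m: "dist pp m \<le> (dist pp pm + \<eta>) / 2" and m_pm: "dist m pm \<le> (dist pp pm + \<eta>) / 2"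
    using length_space_approx_midpoint[OF assms(1,2)] by blast
  have "dist q m \<le> dist q pp + dist pp m" by (rule dist_triangle)
  moreover have "dist qh qp < r" using qp by (simp add: dist_commute)
  ultimately have "m \<in> ball q (10*r)"
    unfolding mem_ball using pp_m pp_pm q_pp \<open>dist qp qm < 2*r\<close> \<open>r > 0\<close> assms(3) by argo
  then obtain x where x: "x \<in> prod_ball k qh (10*r)" "dist (\<Phi> x) m < \<eta>"
    using GH unfolding pointed_GH_approx_def by blast
  have lift: "dist (snd x) b < dist qp qm / 2 + 3*\<eta>"
    if "dist b qh < r" and "dist m (\<Phi> (\<lambda>_. 0, b)) \<le> (dist pp pm + \<eta>) / 2" for b
  proof -
    have "dist (snd x) b \<le> dist_prod k x (\<lambda>_. 0, b)"
      using dist_snd_le_dist_prod[of x "(\<lambda>_. 0, b)"] by simp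
    also have "\<dots> < dist (\<Phi> x) (\<Phi> (\<lambda>_. 0, b)) + \<eta>"
      using GH_approx_distortion[OF x(1), of "(\<lambda>_. 0, b)"] that(1) \<open>r > 0\<close>
      by (simp add: zero_slice_in_prod_ball_iff)
    also have "\<dots> \<le> dist (\<Phi> x) m + dist m (\<Phi> (\<lambda>_. 0, b)) + \<eta>"
      using dist_triangle by simp
    finally show ?thesis using x(2) that(2) pp_pm by argo
  qed
  have y_qp: "dist (snd x) qp < dist qp qm / 2 + 3*\<eta>"
    using lift[OF qp] pp_m unfolding pp_def by (simp add: dist_commute)
  have y_qm: "dist (snd x) qm < dist qp qm / 2 + 3*\<eta>"
    using lift[OF qm] m_pm unfolding pm_def by simp
  have "dist (snd x) qh < 3*r"
    using dist_triangle[of "snd x" qh qp] y_qp qp \<open>dist qp qm < 2*r\<close> assms(3)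
    by (simp add: dist_commute)
  with y_qp y_qm show thesis by (intro that)
qed

end

theorem lemma2p8:
  fixes n k :: nat and \<delta> r :: real
    and qh :: "'x::metric_space" and q :: "'m::metric_space"
    and \<Phi> :: "(nat \<Rightarrow> real) \<times> 'x \<Rightarrow> 'm"
  assumes "n \<ge> 3" and "k \<le> n" and "0 < \<delta>" and "\<delta> < 1/3" and "r > 0"
    and "length_space TYPE('m)"
    and "pointed_GH_approx (prod_ball k qh (10*r)) (dist_prod k) (\<lambda>_. 0, qh) (ball q (10*r)) q (\<delta>*r) \<Phi>"
  shows "\<forall>qp\<in>ball qh r. \<forall>qm\<in>ball qh r. \<exists>q0\<in>ball qh (3*r).
     \<bar>dist q0 qp - dist qp qm / 2\<bar> \<le> 8 * sqrt \<delta> * r \<and>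
     \<bar>dist q0 qm - dist qp qm / 2\<bar> \<le> 8 * sqrt \<delta> * r \<and>
     (sqrt \<delta> * r \<le> dist qp qm / 100 \<longrightarrow>
       (let q1 = \<Phi> (\<lambda>_. 0, q0); pp = \<Phi> (\<lambda>_. 0, qp); pm = \<Phi> (\<lambda>_. 0, qm) in
         dist q1 pp + dist q1 pm - dist pp pm \<le> 16 * sqrt \<delta> * r \<and>
         min (dist q1 pp) (dist q1 pm) \<ge> dist qp qm / 4))"
proof (intro ballI)
  fix qp qm assume "qp \<in> ball qh r" "qm \<in> ball qh r"
  hence qp: "dist qp qh < r" and qm: "dist qm qh < r" by (auto simp: dist_commute)
  obtain y where y: "dist y qh < 3*r"
    and y_qp: "dist y qp < dist qp qm / 2 + 3*(\<delta>*r)" and y_qm: "dist y qm < dist qp qm / 2 + 3*(\<delta>*r)"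
    using GH_approx_lift_approx_midpoint[OF assms(7,6) _ _ qp qm] assms(3-5) by auto
  define q1 pp pm where "q1 = \<Phi> (\<lambda>_. 0, y)" and "pp = \<Phi> (\<lambda>_. 0, qp)" and "pm = \<Phi> (\<lambda>_. 0, qm)"
  have "\<bar>dist q1 pp - dist y qp\<bar> < \<delta>*r" "\<bar>dist q1 pm - dist y qm\<bar> < \<delta>*r"
       "\<bar>dist pp pm - dist qp qm\<bar> < \<delta>*r"
    unfolding q1_def pp_def pm_def
    using GH_approx_distortion_zero_slice[OF assms(7)] y qp qm assms(5) by simp_all
  moreover have "dist qp qm \<le> dist y qp + dist y qm"
    by (rule dist_triangle3)
  moreover have "\<delta>*r \<le> sqrt \<delta> * r"
    using real_le_rsqrt[of \<delta> \<delta>] assms(3-5) by (simp add: power2_eq_square)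
  ultimately have "\<bar>dist y qp - dist qp qm / 2\<bar> \<le> 8 * sqrt \<delta> * r"
    and "\<bar>dist y qm - dist qp qm / 2\<bar> \<le> 8 * sqrt \<delta> * r"
    and "sqrt \<delta> * r \<le> dist qp qm / 100 \<longrightarrow>
       dist q1 pp + dist q1 pm - dist pp pm \<le> 16 * sqrt \<delta> * r \<and> min (dist q1 pp) (dist q1 pm) \<ge> dist qp qm / 4"
    using y_qp y_qm by argo+
  with y show "\<exists>q0\<in>ball qh (3*r).
     \<bar>dist q0 qp - dist qp qm / 2\<bar> \<le> 8 * sqrt \<delta> * r \<and>
     \<bar>dist q0 qm - dist qp qm / 2\<bar> \<le> 8 * sqrt \<delta> * r \<and>
     (sqrt \<delta> * r \<le> dist qp qm / 100 \<longrightarrow>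
       (let q1 = \<Phi> (\<lambda>_. 0, q0); pp = \<Phi> (\<lambda>_. 0, qp); pm = \<Phi> (\<lambda>_. 0, qm) in
         dist q1 pp + dist q1 pm - dist pp pm \<le> 16 * sqrt \<delta> * r \<and>
         min (dist q1 pp) (dist q1 pm) \<ge> dist qp qm / 4))"
    unfolding q1_def pp_def pm_def by (intro bexI[of _ y]) (simp_all add: Let_def dist_commute)
qed

end
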